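(* Let $\kappa\in\mathcal O_F^\times$ with $d(\kappa)=2e-1$ and let $\delta\in\mathcal O_F^\times$. Then $2^{-1}\pi A(2,2\rho)\perp\langle\Delta\delta\rangle\cong\prec\delta\kappa^{\#},-\delta\kappa^{\#}\kappa\pi^{2-2e},\delta\kappa\succ$.
   Context: $F$ dyadic local field, $\mathcal O_F$, $\mathcal O_F^\times$, uniformizer $\pi$, valuation $\operatorname{ord}$, $e=\operatorname{ord}(2)$; $\mathfrak d(c)=\bigcap_{x\in F}(c-x^2)\mathcal O_F$, $d(c)=\operatorname{ord}(c^{-1}\mathfrak d(c))$; $\rho\in\mathcal O_F^\times$ with $\Delta=1-4\rho$, $\mathfrak d(\Delta)=4\mathcal O_F$. $\gamma A(\xi,\eta)$ is the binary lattice with Gram matrix $\begin{pmatrix}\gamma\xi&\gamma\\\gamma&\gamma\eta\end{pmatrix}$; $\langle a\rangle$ unary lattice. Since $d(\kappa)=2e-1$ is finite and even order, write $\kappa=s^2(1+r\pi^{2e-1})$ with $r,s\in\mathcal O_F^\times$ and set $\kappa^{\#}=1+4\rho r^{-1}\pi^{1-2e}$ (any such choice). BONG notation: $\prec a_1,\ldots,a_k\succ$ is the lattice $L$ having a BONG $x_1,\ldots,x_k$ with $Q(x_i)=a_i$, where $x_1,\ldots,x_k\in FL$ is a BONG of $L$ if $x_1\in L$ with $Q(x_1)\mathcal O_F$ equal to the norm ideal of $L$ (generated by $Q(L)$) and $x_2,\ldots,x_k$ is a BONG of the projection of $L$ onto $(Fx_1)^\perp$. *)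

theory Defs
  imports "HOL-Analysis.Analysis"
begin

text \<open>A valuation is a map v :: 'a => int; its value at 0 is irrelevant
(ord 0 = infinity is encoded by the disjunct x = 0).\<close>

definition Oring :: "('a::field \<Rightarrow> int) \<Rightarrow> 'a set" where
  "Oring v = {x. x = 0 \<or> 0 \<le> v x}"

definition is_unit :: "('a::field \<Rightarrow> int) \<Rightarrow> 'a \<Rightarrow> bool" where
  "is_unit v x \<longleftrightarrow> x \<noteq> 0 \<and> v x = 0"

text \<open>F complete, discretely valued (normalized), characteristic 0, with finite
residue field of characteristic 2: i.e. a dyadic local field (finite extension of Q_2).\<close>

definition dyadic_local_field :: "('a::field \<Rightarrow> int) \<Rightarrow> bool" where
  "dyadic_local_field v \<longleftrightarrow>
     (\<forall>x y. x \<noteq> 0 \<longrightarrow> y \<noteq> 0 \<longrightarrow> v (x * y) = v x + v y) \<and>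
     (\<forall>x y. x \<noteq> 0 \<longrightarrow> y \<noteq> 0 \<longrightarrow> x + y \<noteq> 0 \<longrightarrow> min (v x) (v y) \<le> v (x + y)) \<and>
     (\<exists>p. p \<noteq> 0 \<and> v p = 1) \<and>
     (\<forall>a :: nat \<Rightarrow> 'a.
        (\<forall>N::int. \<exists>M. \<forall>m\<ge>M. \<forall>n\<ge>M. a m = a n \<or> N \<le> v (a m - a n)) \<longrightarrow>
        (\<exists>l. \<forall>N::int. \<exists>M. \<forall>n\<ge>M. a n = l \<or> N \<le> v (a n - l))) \<and>
     (\<exists>R. finite R \<and> R \<subseteq> Oring v \<and> (\<forall>x\<in>Oring v. \<exists>r\<in>R. x = r \<or> 1 \<le> v (x - r))) \<and>
     (2::'a) \<noteq> 0 \<and> 0 < v 2"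

definition pid :: "('a::field \<Rightarrow> int) \<Rightarrow> 'a \<Rightarrow> 'a set" where
  "pid v a = {c * a | c. c \<in> Oring v}"

definition oideal :: "('a::field \<Rightarrow> int) \<Rightarrow> 'a set \<Rightarrow> 'a set" where
  "oideal v S = {y. \<exists>(n::nat) c s. (\<forall>i<n. c i \<in> Oring v \<and> s i \<in> S) \<and> y = (\<Sum>i<n. c i * s i)}"

definition ideal_ord :: "('a::field \<Rightarrow> int) \<Rightarrow> 'a set \<Rightarrow> int \<Rightarrow> bool" where
  "ideal_ord v I n \<longleftrightarrow> (\<exists>a\<in>I. a \<noteq> 0 \<and> v a = n) \<and> (\<forall>a\<in>I. a \<noteq> 0 \<longrightarrow> n \<le> v a)"

definition qdefect :: "('a::field \<Rightarrow> int) \<Rightarrow> 'a \<Rightarrow> 'a set" where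
  "qdefect v c = (\<Inter>x. pid v (c - x^2))"

definition Bf :: "'a::field ^'n^'n \<Rightarrow> 'a^'n \<Rightarrow> 'a^'n \<Rightarrow> 'a" where
  "Bf G x y = (\<Sum>i\<in>UNIV. \<Sum>j\<in>UNIV. x$i * G$i$j * y$j)"

definition Qf :: "'a::field ^'n^'n \<Rightarrow> 'a^'n \<Rightarrow> 'a" where
  "Qf G x = Bf G x x"

definition symm :: "'a ^'n^'n \<Rightarrow> bool" where
  "symm G \<longleftrightarrow> (\<forall>i j. G$i$j = G$j$i)"

definition projperp :: "'a::field ^'n^'n \<Rightarrow> 'a^'n \<Rightarrow> 'a^'n \<Rightarrow> 'a^'n" where
  "projperp G x y = y - (Bf G x y / Qf G x) *s x"

text \<open>BONG (basis of orthogonal norm generators), recursively as in the paper;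
the norm ideal n(L) is the O_F-module generated by Q(L).\<close>
fun bong :: "('a::field \<Rightarrow> int) \<Rightarrow> 'a^'n^'n \<Rightarrow> ('a^'n) list \<Rightarrow> ('a^'n) set \<Rightarrow> bool" where
  "bong v G [] L \<longleftrightarrow> L = {0}"
| "bong v G (x # xs) L \<longleftrightarrow>
     x \<in> L \<and> Qf G x \<noteq> 0 \<and> pid v (Qf G x) = oideal v (Qf G ` L) \<and>
     bong v G xs (projperp G x ` L)"

definition lattice_iso :: "'a::field ^'n^'n \<Rightarrow> 'a^'n^'n \<Rightarrow> ('a^'n \<Rightarrow> 'a^'n) \<Rightarrow> ('a^'n) set \<Rightarrow> ('a^'n) set \<Rightarrow> bool" where
  "lattice_iso G1 G2 \<sigma> L M \<longleftrightarrow>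
     (\<forall>x y. \<sigma> (x + y) = \<sigma> x + \<sigma> y) \<and> (\<forall>c x. \<sigma> (c *s x) = c *s \<sigma> x) \<and> bij \<sigma> \<and>
     (\<forall>x y. Bf G2 (\<sigma> x) (\<sigma> y) = Bf G1 x y) \<and> \<sigma> ` L = M"

text \<open>The standard lattice O_F^n (the lattice with basis e_1..e_n, Gram matrix G).\<close>
definition stdlat :: "('a::field \<Rightarrow> int) \<Rightarrow> ('a^'n) set" where
  "stdlat v = {x. \<forall>i. x$i \<in> Oring v}"

text \<open>Gram matrix of 2^{-1} pi A(2, 2 rho) \<perp> <Delta delta>, i.e.
 [[pi, pi/2, 0], [pi/2, pi rho, 0], [0, 0, Delta delta]], indices 1,2,3 of type 3.\<close>
definition gram_lhs :: "'a::field \<Rightarrow> 'a \<Rightarrow> 'a \<Rightarrow> 'a^3^3" where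
  "gram_lhs \<pi> \<rho> \<delta> = (\<chi> i j.
     if i = 1 \<and> j = 1 then (\<pi>/2) * 2
     else if (i = 1 \<and> j = 2) \<or> (i = 2 \<and> j = 1) then \<pi>/2
     else if i = 2 \<and> j = 2 then (\<pi>/2) * (2 * \<rho>)
     else if i = 3 \<and> j = 3 then (1 - 4 * \<rho>) * \<delta>
     else 0)"

definition kappa_sharp :: "'a::field \<Rightarrow> 'a \<Rightarrow> 'a \<Rightarrow> nat \<Rightarrow> 'a" where
  "kappa_sharp \<rho> r \<pi> e = 1 + 4 * \<rho> * inverse r / \<pi> ^ (2 * e - 1)"

end

theory Submission
  imports Defs
begin

text \<open>The binary component \<open>2\<^sup>-\<^sup>1\<pi> A(2, 2\<rho>)\<close> is \<open>\<pi>\<close> times the norm form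
  \<open>N(a, b) = a\<^sup>2 + a b + \<rho> b\<^sup>2\<close> of the unramified quadratic extension \<open>F[\<omega>]\<close>, \<open>\<omega>\<^sup>2 = \<omega> - \<rho>\<close>.
  By completeness and finiteness of the residue field, \<open>N\<close> represents every unit (a square root
  modulo \<open>\<pi>\<close> followed by a Hensel step through the Artin-Schreier equation \<open>y\<^sup>2 + y = c\<close>), and
  multiplication by \<open>\<mu>\<close> scales \<open>N\<close> by \<open>N(\<mu>)\<close>. Choosing \<open>\<mu>\<close> of a suitable unit norm,
  \<open>x1 = (\<mu>, 1)\<close> has norm \<open>\<delta>\<kappa>\<^sup>#\<close>; a \<open>\<mu>\<close>-multiple of \<open>(k x, -k)\<close>, with \<open>x\<^sup>2 - x = c\<close>,
  projects to \<open>x2\<close> of norm \<open>-\<delta>\<kappa>\<^sup>#\<kappa>\<pi>\<^sup>2\<^sup>-\<^sup>2\<^sup>e\<close>; and \<open>x3\<close>, orthogonal to both, has norm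
  \<open>\<delta>\<kappa>\<close>. Valuation estimates show that lattice vectors have integral coefficients along
  \<open>x2\<close> and \<open>x3\<close>, so \<open>x1, x2, x3\<close> is a BONG of the lattice itself and the isometry is the identity.\<close>

section \<open>Valuations\<close>

definition val_ge :: "('a::field \<Rightarrow> int) \<Rightarrow> 'a \<Rightarrow> int \<Rightarrow> bool" where
  "val_ge v x n \<longleftrightarrow> x = 0 \<or> n \<le> v x"

locale dyadic_field =
  fixes v :: "'a::field \<Rightarrow> int"
  assumes dyadic: "dyadic_local_field v"
begin

lemma val_mult: "x \<noteq> 0 \<Longrightarrow> y \<noteq> 0 \<Longrightarrow> v (x * y) = v x + v y"
  using dyadic unfolding dyadic_local_field_def by (elim conjE) simp

lemma val_add: "x \<noteq> 0 \<Longrightarrow> y \<noteq> 0 \<Longrightarrow> x + y \<noteq> 0 \<Longrightarrow> min (v x) (v y) \<le> v (x + y)"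
  using dyadic unfolding dyadic_local_field_def by (elim conjE) simp

lemma two_neq_zero: "(2::'a) \<noteq> 0" and val_two_pos: "0 < v 2"
  using dyadic unfolding dyadic_local_field_def by (elim conjE, simp)+

lemma four_neq_zero: "(4::'a) \<noteq> 0" and eight_neq_zero: "(8::'a) \<noteq> 0"
  and sixteen_neq_zero: "(16::'a) \<noteq> 0"
  using two_neq_zero mult_eq_0_iff[of "2::'a" 2] mult_eq_0_iff[of "2::'a" 4] mult_eq_0_iff[of "2::'a" 8]
  by simp_all

lemma cauchy_converges:
  fixes a :: "nat \<Rightarrow> 'a"
  assumes "\<forall>N::int. \<exists>M. \<forall>m\<ge>M. \<forall>n\<ge>M. a m = a n \<or> N \<le> v (a m - a n)"
  shows "\<exists>l. \<forall>N::int. \<exists>M. \<forall>n\<ge>M. a n = l \<or> N \<le> v (a n - l)"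
  using dyadic assms unfolding dyadic_local_field_def by (elim conjE) blast

lemma finite_residue_field:
  "\<exists>R. finite R \<and> R \<subseteq> Oring v \<and> (\<forall>x\<in>Oring v. \<exists>r\<in>R. x = r \<or> 1 \<le> v (x - r))"
  using dyadic unfolding dyadic_local_field_def by (elim conjE)

lemma val_one: "v 1 = 0"
  using val_mult[of 1 1] by simp

lemma val_minus: "v (- x) = v x"
proof (cases "x = 0")
  case False
  have "v (-1) = 0" using val_mult[of "-1" "-1"] val_one by simp
  with False show ?thesis using val_mult[of "-1" x] by simp
qed simp

lemma val_inverse: "x \<noteq> 0 \<Longrightarrow> v (inverse x) = - v x"
  using val_mult[of x "inverse x"] val_one by simp

lemma val_divide: "x \<noteq> 0 \<Longrightarrow> y \<noteq> 0 \<Longrightarrow> v (x / y) = v x - v y"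
  by (simp add: divide_inverse val_mult val_inverse)

lemma val_power: "x \<noteq> 0 \<Longrightarrow> v (x ^ n) = int n * v x"
  by (induction n) (auto simp: val_one val_mult algebra_simps)

lemma val_ge_0 [simp]: "val_ge v 0 n"
  by (simp add: val_ge_def)

lemma val_ge_mono: "val_ge v x n \<Longrightarrow> m \<le> n \<Longrightarrow> val_ge v x m"
  by (auto simp: val_ge_def)

lemma val_ge_minus [simp]: "val_ge v (- x) n \<longleftrightarrow> val_ge v x n"
  by (simp add: val_ge_def val_minus)

lemma val_ge_diff_commute: "val_ge v (a - b) n \<longleftrightarrow> val_ge v (b - a) n"
  by (metis minus_diff_eq val_ge_minus)

lemma val_ge_one: "val_ge v 1 0"
  by (simp add: val_ge_def val_one)

lemma val_ge_two: "val_ge v 2 1"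
  using val_two_pos by (simp add: val_ge_def)

lemma Oring_iff_val_ge: "x \<in> Oring v \<longleftrightarrow> val_ge v x 0"
  by (simp add: Oring_def val_ge_def)

lemma val_ge_add: assumes "val_ge v x n" "val_ge v y n" shows "val_ge v (x + y) n"
proof (cases "x = 0 \<or> y = 0 \<or> x + y = 0")
  case False
  then have "min (v x) (v y) \<le> v (x + y)" by (intro val_add) auto
  with assms False show ?thesis by (auto simp: val_ge_def)
qed (use assms in auto)

lemma val_ge_diff: "val_ge v x n \<Longrightarrow> val_ge v y n \<Longrightarrow> val_ge v (x - y) n"
  using val_ge_add[of x n "- y"] by simp

lemma val_ge_mult: assumes "val_ge v x m" "val_ge v y n" shows "val_ge v (x * y) (m + n)"
  using assms val_mult[of x y] by (cases "x = 0 \<or> y = 0") (auto simp: val_ge_def)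

lemma val_ge_mult_left: "val_ge v x 0 \<Longrightarrow> val_ge v y n \<Longrightarrow> val_ge v (x * y) n"
  using val_ge_mult[of x 0 y n] by simp

lemma val_ge_mult_right: "val_ge v x n \<Longrightarrow> val_ge v y 0 \<Longrightarrow> val_ge v (x * y) n"
  using val_ge_mult[of x n y 0] by simp

lemma val_ge_power: "val_ge v x n \<Longrightarrow> val_ge v (x ^ k) (int k * n)"
proof (induction k)
  case (Suc k)
  then have "val_ge v (x * x ^ k) (n + int k * n)" by (intro val_ge_mult)
  then show ?case by (simp add: algebra_simps)
qed (simp add: val_ge_one)

lemma val_ge_power_0: "val_ge v x 0 \<Longrightarrow> val_ge v (x ^ k) 0"
  using val_ge_power[of x 0 k] by simp

lemma val_ge_sum: fixes n :: nat shows "(\<And>i. i < n \<Longrightarrow> val_ge v (f i) N) \<Longrightarrow> val_ge v (\<Sum>i<n. f i) N"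
  by (induction n) (auto intro: val_ge_add)

lemma eq_0_if_val_ge_all: "(\<And>N. val_ge v x N) \<Longrightarrow> x = 0"
  by (metis val_ge_def add1_zle_eq order_less_irrefl)

lemma is_unit_val_ge: "is_unit v x \<Longrightarrow> val_ge v x 0"
  by (simp add: is_unit_def val_ge_def)

lemma is_unit_nonzero: "is_unit v x \<Longrightarrow> x \<noteq> 0"
  by (simp add: is_unit_def)

lemma is_unit_one: "is_unit v 1"
  by (simp add: is_unit_def val_one)

lemma is_unit_inverse: "is_unit v x \<Longrightarrow> is_unit v (inverse x)"
  by (simp add: is_unit_def val_inverse)

lemma is_unit_mult: "is_unit v x \<Longrightarrow> is_unit v y \<Longrightarrow> is_unit v (x * y)"
  by (simp add: is_unit_def val_mult)

lemma is_unit_divide: "is_unit v x \<Longrightarrow> is_unit v y \<Longrightarrow> is_unit v (x / y)"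
  by (simp add: divide_inverse is_unit_mult is_unit_inverse)

lemma is_unit_power: "is_unit v x \<Longrightarrow> is_unit v (x ^ n)"
  by (simp add: is_unit_def val_power)

lemma val_ge_inverse_unit: "is_unit v x \<Longrightarrow> val_ge v (inverse x) 0"
  by (simp add: is_unit_inverse is_unit_val_ge)

lemma is_unit_add_small: assumes x: "is_unit v x" and u: "val_ge v u 1" shows "is_unit v (x + u)"
proof (cases "u = 0")
  case False
  then have vu: "1 \<le> v u" using u by (simp add: val_ge_def)
  have x0: "x \<noteq> 0" "v x = 0" using x by (auto simp: is_unit_def)
  have nz: "x + u \<noteq> 0"
  proof
    assume "x + u = 0"
    then have "u = - x" by (simp add: eq_neg_iff_add_eq_0 add.commute)
    with vu x0 val_minus[of x] show False by simp
  qed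
  have "0 \<le> v (x + u)" using val_add[OF x0(1) False nz] x0 vu by simp
  moreover have "min (v (x + u)) (v (- u)) \<le> v x"
    using val_add[of "x + u" "- u"] nz False x0(1) by simp
  then have "\<not> 1 \<le> v (x + u)" using vu x0(2) val_minus[of u] by linarith
  ultimately have "v (x + u) = 0" by linarith
  with nz show ?thesis by (simp add: is_unit_def)
qed (use x in simp)

end

section \<open>Artin-Schreier roots and the norm form\<close>

primrec artin_schreier_iter :: "'a::field \<Rightarrow> nat \<Rightarrow> 'a" where
  "artin_schreier_iter c 0 = 0"
| "artin_schreier_iter c (Suc n) = c - (artin_schreier_iter c n)\<^sup>2"

context dyadic_field
begin

lemma artin_schreier_iter_val_ge:
  assumes "val_ge v c 1" shows "val_ge v (artin_schreier_iter c n) 1"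
proof (induction n)
  case (Suc n)
  then have "val_ge v ((artin_schreier_iter c n)\<^sup>2) 1"
    using val_ge_power[of _ 1 2] val_ge_mono by fastforce
  with assms show ?case by (simp add: val_ge_diff)
qed simp

lemma artin_schreier_iter_cauchy:
  assumes c: "val_ge v c 1" and "n \<le> m"
  shows "val_ge v (artin_schreier_iter c m - artin_schreier_iter c n) (int n + 1)"
proof -
  let ?y = "artin_schreier_iter c"
  have consecutive: "val_ge v (?y (Suc k) - ?y k) (int k + 1)" for k
  proof (induction k)
    case (Suc k)
    have "?y (Suc (Suc k)) - ?y (Suc k) = - ((?y (Suc k) - ?y k) * (?y (Suc k) + ?y k))"
      by (simp add: power2_eq_square algebra_simps)
    moreover have "val_ge v (?y (Suc k) + ?y k) 1"
      using artin_schreier_iter_val_ge[OF c] by (blast intro: val_ge_add)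
    ultimately show ?case using val_ge_mult[OF Suc.IH] by fastforce
  qed (use c in simp)
  from \<open>n \<le> m\<close> show ?thesis
  proof (induction m rule: dec_induct)
    case (step m)
    have "val_ge v (?y (Suc m) - ?y m) (int n + 1)"
      using consecutive[of m] step.hyps(1) by (elim val_ge_mono) simp
    from val_ge_add[OF this step.IH] show ?case by (simp del: artin_schreier_iter.simps)
  qed simp
qed

lemma converges_if_val_ge_diff:
  fixes a :: "nat \<Rightarrow> 'a"
  assumes diff: "\<And>n m. n \<le> m \<Longrightarrow> val_ge v (a m - a n) (int n + 1)"
  shows "\<exists>l. \<forall>N. \<exists>M. \<forall>n\<ge>M. val_ge v (a n - l) N"
proof -
  have "\<forall>N::int. \<exists>M. \<forall>m\<ge>M. \<forall>n\<ge>M. a m = a n \<or> N \<le> v (a m - a n)"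
  proof (intro allI exI impI)
    fix N :: int and m n :: nat
    assume "nat N \<le> m" "nat N \<le> n"
    moreover have "val_ge v (a m - a n) (int (min m n) + 1)"
    proof (cases "n \<le> m")
      case False
      then have "val_ge v (- (a n - a m)) (int m + 1)" using diff[of m n] by (simp only: val_ge_minus)
      with False show ?thesis by simp
    qed (use diff in simp)
    ultimately show "a m = a n \<or> N \<le> v (a m - a n)" by (auto simp: val_ge_def)
  qed
  then obtain l where "\<forall>N::int. \<exists>M. \<forall>n\<ge>M. a n = l \<or> N \<le> v (a n - l)"
    using cauchy_converges by blast
  then have "\<exists>M. \<forall>n\<ge>M. val_ge v (a n - l) N" for N
    by (auto simp: val_ge_def dest: spec[of _ N])
  then show ?thesis by blast
qed

lemma artin_schreier_root:
  assumes c: "val_ge v c 1" shows "\<exists>y. val_ge v y 1 \<and> y\<^sup>2 + y = c"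
proof -
  define a where "a = artin_schreier_iter c"
  obtain l where close: "\<exists>M. \<forall>n\<ge>M. val_ge v (a n - l) N" for N
    using converges_if_val_ge_diff[of a] artin_schreier_iter_cauchy[OF c] unfolding a_def by blast
  have a: "val_ge v (a n) 1" for n
    unfolding a_def by (rule artin_schreier_iter_val_ge[OF c])
  have l1: "val_ge v l 1"
  proof -
    obtain M where "val_ge v (a M - l) 1" using close by blast
    from val_ge_diff[OF a[of M] this] show ?thesis by simp
  qed
  have "l\<^sup>2 + l - c = 0"
  proof (rule eq_0_if_val_ge_all)
    fix N :: int
    obtain M where M: "\<forall>n\<ge>M. val_ge v (a n - l) (max N 1)" using close by blast
    have eq: "l\<^sup>2 + l - c = - (a (Suc M) - l) - (a M - l) * (l + a M)"
      unfolding a_def by (simp add: power2_eq_square algebra_simps)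
    have "val_ge v (l + a M) 0" using val_ge_add[OF l1 a] by (rule val_ge_mono) simp
    with M have "val_ge v (- (a (Suc M) - l) - (a M - l) * (l + a M)) (max N 1)"
      using val_ge_mult_right val_ge_minus val_ge_diff by (metis le_refl le_SucI)
    then have "val_ge v (l\<^sup>2 + l - c) (max N 1)" by (simp only: eq)
    then show "val_ge v (l\<^sup>2 + l - c) N" by (rule val_ge_mono) simp
  qed
  with l1 show ?thesis by auto
qed

end

definition residue_class :: "('a::field \<Rightarrow> int) \<Rightarrow> 'a \<Rightarrow> 'a set" where
  "residue_class v a = {y. val_ge v y 0 \<and> val_ge v (y - a) 1}"

definition square_class :: "('a::field \<Rightarrow> int) \<Rightarrow> 'a set \<Rightarrow> 'a set" where
  "square_class v X = {y. val_ge v y 0 \<and> (\<exists>x\<in>X. val_ge v (y - x\<^sup>2) 1)}"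

definition qnorm :: "'a::comm_ring_1 \<Rightarrow> 'a \<Rightarrow> 'a \<Rightarrow> 'a" where
  "qnorm \<rho> a b = a\<^sup>2 + a * b + \<rho> * b\<^sup>2"

context dyadic_field
begin

lemma residue_class_eq:
  assumes "val_ge v (a - b) 1" shows "residue_class v a = residue_class v b"
proof -
  have "val_ge v (y - a) 1 \<longleftrightarrow> val_ge v (y - b) 1" for y
  proof
    assume "val_ge v (y - a) 1"
    from val_ge_add[OF this assms] show "val_ge v (y - b) 1" by simp
  next
    assume "val_ge v (y - b) 1"
    from val_ge_diff[OF this assms] show "val_ge v (y - a) 1" by simp
  qed
  then show ?thesis unfolding residue_class_def by auto
qed

lemma mem_residue_class_self: "val_ge v a 0 \<Longrightarrow> a \<in> residue_class v a"
  by (simp add: residue_class_def)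

lemma square_class_residue_class:
  assumes a: "val_ge v a 0" shows "square_class v (residue_class v a) = residue_class v (a\<^sup>2)"
proof (intro equalityI subsetI)
  fix y assume "y \<in> square_class v (residue_class v a)"
  then obtain z where y: "val_ge v y 0" "val_ge v (y - z\<^sup>2) 1"
    and z: "val_ge v z 0" "val_ge v (z - a) 1"
    unfolding square_class_def residue_class_def by blast
  have eq: "y - a\<^sup>2 = (y - z\<^sup>2) + (z - a) * (z + a)" by (simp add: power2_eq_square algebra_simps)
  have "val_ge v ((z - a) * (z + a)) 1" using z a by (intro val_ge_mult_right val_ge_add)
  then have "val_ge v (y - a\<^sup>2) 1" unfolding eq by (rule val_ge_add[OF y(2)])
  with y(1) show "y \<in> residue_class v (a\<^sup>2)" by (simp add: residue_class_def)
next
  fix y assume "y \<in> residue_class v (a\<^sup>2)"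
  with mem_residue_class_self[OF a] show "y \<in> square_class v (residue_class v a)"
    unfolding square_class_def residue_class_def by blast
qed

lemma square_congruence_cancel:
  assumes x: "val_ge v x 0" and y: "val_ge v y 0" and d: "val_ge v (x\<^sup>2 - y\<^sup>2) 1"
  shows "val_ge v (x - y) 1"
proof (cases "x = y")
  case False
  have "(x - y)\<^sup>2 = (x\<^sup>2 - y\<^sup>2) - 2 * y * (x - y)" by (simp add: power2_eq_square algebra_simps)
  moreover have "val_ge v (2 * y * (x - y)) 1"
    using val_ge_mult[OF val_ge_mult[OF val_ge_two y] val_ge_diff[OF x y]] by simp
  ultimately have "val_ge v ((x - y)\<^sup>2) 1" using d by (simp add: val_ge_diff)
  moreover have "v ((x - y)\<^sup>2) = 2 * v (x - y)" using False by (simp add: val_power)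
  ultimately show ?thesis by (auto simp: val_ge_def)
qed simp

text \<open>Squaring permutes the finitely many residue classes, since it is injective on them.\<close>

lemma finite_residue_class_representatives:
  "\<exists>R. finite R \<and> (\<forall>r\<in>R. val_ge v r 0) \<and>
     (\<forall>x. val_ge v x 0 \<longrightarrow> (\<exists>r\<in>R. residue_class v x = residue_class v r))"
proof -
  obtain R where R: "finite R" "R \<subseteq> Oring v"
    and cover: "\<forall>x\<in>Oring v. \<exists>r\<in>R. x = r \<or> 1 \<le> v (x - r)"
    using finite_residue_field by blast
  have "\<exists>r\<in>R. residue_class v x = residue_class v r" if "val_ge v x 0" for x
  proof -
    have "x \<in> Oring v" using that by (simp add: Oring_iff_val_ge)
    then obtain r where "r \<in> R" "x = r \<or> 1 \<le> v (x - r)" using cover by blast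
    then show ?thesis using residue_class_eq[of x r] by (auto simp: val_ge_def)
  qed
  moreover have "\<forall>r\<in>R. val_ge v r 0" using R(2) by (auto simp: Oring_iff_val_ge)
  ultimately show ?thesis using R(1) by blast
qed

lemma exists_square_congruent:
  assumes t: "val_ge v t 0" shows "\<exists>b. val_ge v b 0 \<and> val_ge v (b\<^sup>2 - t) 1"
proof -
  obtain R where R: "finite R" and R_int: "\<And>r. r \<in> R \<Longrightarrow> val_ge v r 0"
    and rep: "\<And>x. val_ge v x 0 \<Longrightarrow> \<exists>r\<in>R. residue_class v x = residue_class v r"
    using finite_residue_class_representatives by blast
  let ?C = "residue_class v ` R"
  have "square_class v ` ?C \<subseteq> ?C"
  proof clarify
    fix r assume "r \<in> R"
    then obtain r' where "r' \<in> R" "residue_class v (r\<^sup>2) = residue_class v r'"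
      using rep R_int val_ge_power_0 by blast
    with \<open>r \<in> R\<close> R_int show "square_class v (residue_class v r) \<in> ?C"
      by (simp add: square_class_residue_class)
  qed
  moreover have "inj_on (square_class v) ?C"
  proof (rule inj_onI, clarify)
    fix r1 r2 assume r: "r1 \<in> R" "r2 \<in> R"
      and "square_class v (residue_class v r1) = square_class v (residue_class v r2)"
    then have "r1\<^sup>2 \<in> residue_class v (r2\<^sup>2)"
      using mem_residue_class_self[OF val_ge_power_0, of r1 2] R_int
      by (simp add: square_class_residue_class)
    then have "val_ge v (r1 - r2) 1"
      using square_congruence_cancel R_int r by (simp add: residue_class_def)
    then show "residue_class v r1 = residue_class v r2" by (rule residue_class_eq)
  qed
  ultimately have "square_class v ` ?C = ?C" using R by (simp add: endo_inj_surj)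
  moreover obtain r0 where r0: "r0 \<in> R" "residue_class v t = residue_class v r0" using rep t by blast
  ultimately have "residue_class v r0 \<in> square_class v ` ?C" by simp
  then obtain r where "r \<in> R" "residue_class v r0 = square_class v (residue_class v r)" by blast
  with r0 R_int have r: "r \<in> R" "residue_class v t = residue_class v (r\<^sup>2)"
    by (simp_all add: square_class_residue_class)
  then have "val_ge v (t - r\<^sup>2) 1"
    using mem_residue_class_self[OF t] by (simp add: residue_class_def)
  then have "val_ge v (r\<^sup>2 - t) 1" by (simp only: val_ge_diff_commute)
  with r(1) R_int show ?thesis by blast
qed

lemma qnorm_represents_unit:
  assumes \<rho>: "is_unit v \<rho>" and w: "is_unit v w"
  shows "\<exists>\<alpha> \<beta>. val_ge v \<alpha> 0 \<and> val_ge v \<beta> 0 \<and> qnorm \<rho> \<alpha> \<beta> = w"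
proof -
  have "is_unit v (w / \<rho>)" using w \<rho> by (rule is_unit_divide)
  then obtain b where b: "val_ge v b 0" "val_ge v (b\<^sup>2 - w / \<rho>) 1"
    using exists_square_congruent is_unit_val_ge by blast
  have "is_unit v (w / \<rho> + (b\<^sup>2 - w / \<rho>))"
    using is_unit_add_small[OF \<open>is_unit v (w / \<rho>)\<close> b(2)] .
  then have b2: "is_unit v (b\<^sup>2)" by simp
  then have "b \<noteq> 0" by (auto simp: is_unit_def)
  have "\<rho> \<noteq> 0" using \<rho> by (rule is_unit_nonzero)
  have "val_ge v (\<rho> * (b\<^sup>2 - w / \<rho>)) (0 + 1)" by (rule val_ge_mult[OF is_unit_val_ge[OF \<rho>] b(2)])
  then have "val_ge v (\<rho> * b\<^sup>2 - w) 1" using \<open>\<rho> \<noteq> 0\<close> by (simp add: algebra_simps)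
  then have "val_ge v ((w - \<rho> * b\<^sup>2) * inverse (b\<^sup>2)) (1 + 0)"
    by (intro val_ge_mult val_ge_inverse_unit[OF b2]) (simp only: val_ge_diff_commute)
  \<comment> \<open>Hensel step: \<open>N(b y, b) = w\<close> is an Artin-Schreier equation for \<open>y\<close>\<close>
  then obtain y where y: "val_ge v y 1" "y\<^sup>2 + y = (w - \<rho> * b\<^sup>2) * inverse (b\<^sup>2)"
    using artin_schreier_root by fastforce
  have "qnorm \<rho> (b * y) b = b\<^sup>2 * (y\<^sup>2 + y) + \<rho> * b\<^sup>2"
    by (simp add: qnorm_def power2_eq_square algebra_simps)
  also have "\<dots> = w" using y(2) \<open>b \<noteq> 0\<close> by (simp add: field_simps)
  finally have "qnorm \<rho> (b * y) b = w" .
  moreover have "val_ge v (b * y) 0" using val_ge_mult_left[OF b(1) val_ge_mono[OF y(1)]] by simp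
  ultimately show ?thesis using b(1) by blast
qed

end

section \<open>Orthogonal bases and BONGs\<close>

lemma Bf_add_left: "Bf G (x + y) z = Bf G x z + Bf G y z"
  unfolding Bf_def by (simp add: sum.distrib distrib_right)

lemma Bf_add_right: "Bf G z (x + y) = Bf G z x + Bf G z y"
  unfolding Bf_def by (simp add: sum.distrib distrib_left)

lemma Bf_diff_left: "Bf G (x - y) z = Bf G x z - Bf G y z"
  unfolding Bf_def by (simp add: sum_subtractf left_diff_distrib)

lemma Bf_diff_right: "Bf G z (x - y) = Bf G z x - Bf G z y"
  unfolding Bf_def by (simp add: sum_subtractf right_diff_distrib)

lemma Bf_scale_left: "Bf G (k *s x) z = k * Bf G x z"
  unfolding Bf_def by (simp add: sum_distrib_left mult.assoc)

lemma Bf_scale_right: "Bf G z (k *s x) = k * Bf G z x"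
  unfolding Bf_def by (simp add: sum_distrib_left algebra_simps)

lemma Bf_commute: assumes "symm G" shows "Bf G x y = Bf G y x"
proof -
  have "Bf G x y = (\<Sum>j\<in>UNIV. \<Sum>i\<in>UNIV. x$i * G$i$j * y$j)" unfolding Bf_def by (rule sum.swap)
  also have "\<dots> = Bf G y x"
    using assms unfolding Bf_def symm_def by (intro sum.cong refl) (simp add: ac_simps)
  finally show ?thesis .
qed

lemma Qf_scale: "Qf G (k *s x) = k\<^sup>2 * Qf G x"
  unfolding Qf_def by (simp add: Bf_scale_left Bf_scale_right power2_eq_square)

lemma Qf_scale_add:
  assumes "symm G"
  shows "Qf G (a *s x + b *s y) = a\<^sup>2 * Qf G x + 2 * a * b * Bf G x y + b\<^sup>2 * Qf G y"
  using Bf_commute[OF assms, of y x] unfolding Qf_def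
  by (simp add: Bf_add_left Bf_add_right Bf_scale_left Bf_scale_right power2_eq_square algebra_simps)

lemma projperp_scale_add:
  assumes "Bf G x u = 0" "Qf G x \<noteq> 0"
  shows "projperp G x (a *s x + u) = u"
  using assms unfolding projperp_def by (simp add: Bf_add_right Bf_scale_right Qf_def)

lemma Bf_projperp_left: "Bf G (projperp G x y) u = Bf G y u - Bf G x y / Qf G x * Bf G x u"
  unfolding projperp_def by (simp add: Bf_diff_left Bf_scale_left)

lemma Bf_projperp_self: "Qf G x \<noteq> 0 \<Longrightarrow> Bf G x (projperp G x y) = 0"
  unfolding projperp_def by (simp add: Bf_diff_right Bf_scale_right Qf_def)

lemma Qf_projperp:
  assumes "symm G" "Qf G x \<noteq> 0"
  shows "Qf G (projperp G x y) = Qf G y - (Bf G x y)\<^sup>2 / Qf G x"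
proof -
  have "Qf G (projperp G x y) = Qf G (1 *s y + (- (Bf G x y / Qf G x)) *s x)"
    unfolding projperp_def by simp
  also have "\<dots> = Qf G y - (Bf G x y)\<^sup>2 / Qf G x"
    unfolding Qf_scale_add[OF assms(1)] Bf_commute[OF assms(1), of y x]
    using assms(2) by (simp add: power2_eq_square field_simps)
  finally show ?thesis .
qed

lemma mem_vec_span_pair:
  assumes "u \<in> vec.span {a, b}" shows "\<exists>k l. u = k *s a + l *s b"
proof -
  have "u \<in> {x. \<exists>k. x - k *s a \<in> vec.span {b}}" using assms vec.span_insert[of a "{b}"] by simp
  then obtain k where "u - k *s a \<in> vec.span {b}" by blast
  then obtain l where "u - k *s a = l *s b" using vec.span_singleton[of b] by blast
  then have "u = k *s a + l *s b" by (simp add: algebra_simps)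
  then show ?thesis by blast
qed

lemma mem_vec_span_triple:
  assumes "u \<in> vec.span {a, b, c}" shows "\<exists>k l n. u = k *s a + l *s b + n *s c"
proof -
  have "u \<in> {x. \<exists>k. x - k *s a \<in> vec.span {b, c}}" using assms vec.span_insert[of a "{b, c}"] by simp
  then obtain k where "u - k *s a \<in> vec.span {b, c}" by blast
  then obtain l n where "u - k *s a = l *s b + n *s c" using mem_vec_span_pair by blast
  then have "u = k *s a + l *s b + n *s c" by (simp add: algebra_simps)
  then show ?thesis by blast
qed

lemma orthogonal_triple_span:
  fixes x1 x2 x3 :: "'a::field^3"
  assumes G: "symm G"
    and orth: "Bf G x1 x2 = 0" "Bf G x1 x3 = 0" "Bf G x2 x3 = 0"
    and nz: "Qf G x1 \<noteq> 0" "Qf G x2 \<noteq> 0" "Qf G x3 \<noteq> 0"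
  shows "vec.span {x1, x2, x3} = UNIV"
proof -
  have "x3 \<noteq> 0" using nz(3) by (auto simp: Qf_def Bf_def)
  then have "vec.independent {x3}" by (simp add: vec.dependent_single)
  moreover have "x2 \<notin> vec.span {x3}"
  proof
    assume "x2 \<in> vec.span {x3}"
    then obtain k where "x2 = k *s x3" using vec.span_singleton[of x3] by blast
    then have "Qf G x2 = k * Bf G x3 x2" unfolding Qf_def by (simp add: Bf_scale_left)
    with orth(3) nz(2) Bf_commute[OF G, of x3 x2] show False by simp
  qed
  ultimately have "vec.independent {x2, x3}" by (rule vec.independent_insertI[rotated])
  moreover have "x1 \<notin> vec.span {x2, x3}"
  proof
    assume "x1 \<in> vec.span {x2, x3}"
    then obtain k l where "x1 = k *s x2 + l *s x3" using mem_vec_span_pair by blast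
    then have "Qf G x1 = Bf G x1 (k *s x2 + l *s x3)" unfolding Qf_def by simp
    with orth nz show False by (simp add: Bf_add_right Bf_scale_right)
  qed
  ultimately have "vec.independent {x1, x2, x3}" by (rule vec.independent_insertI[rotated])
  moreover have "vec.dim (UNIV :: ('a^3) set) \<le> card {x1, x2, x3}"
  proof -
    have "x1 \<noteq> x2" "x1 \<noteq> x3" "x2 \<noteq> x3" using orth nz by (auto simp: Qf_def)
    then show ?thesis unfolding vec_dim_card by simp
  qed
  ultimately show ?thesis using vec.card_ge_dim_independent by blast
qed

lemma orthogonal_basis_expansion:
  fixes x1 x2 x3 y :: "'a::field^3"
  assumes G: "symm G"
    and orth: "Bf G x1 x2 = 0" "Bf G x1 x3 = 0" "Bf G x2 x3 = 0"
    and nz: "Qf G x1 \<noteq> 0" "Qf G x2 \<noteq> 0" "Qf G x3 \<noteq> 0"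
  shows "y = (Bf G x1 y / Qf G x1) *s x1 + (Bf G x2 y / Qf G x2) *s x2 + (Bf G x3 y / Qf G x3) *s x3"
proof -
  obtain k1 k2 k3 where y: "y = k1 *s x1 + k2 *s x2 + k3 *s x3"
    using mem_vec_span_triple orthogonal_triple_span[OF assms] by blast
  have "Bf G x2 x1 = 0" "Bf G x3 x1 = 0" "Bf G x3 x2 = 0"
    using orth Bf_commute[OF G] by metis+
  with orth nz have "Bf G x1 y / Qf G x1 = k1" "Bf G x2 y / Qf G x2 = k2" "Bf G x3 y / Qf G x3 = k3"
    unfolding y by (simp_all add: Bf_add_right Bf_scale_right Qf_def)
  with y show ?thesis by simp
qed

lemma projperp_orthogonal_basis:
  fixes x1 x2 x3 y :: "'a::field^3"
  assumes G: "symm G"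
    and orth: "Bf G x1 x2 = 0" "Bf G x1 x3 = 0" "Bf G x2 x3 = 0"
    and nz: "Qf G x1 \<noteq> 0" "Qf G x2 \<noteq> 0" "Qf G x3 \<noteq> 0"
  shows "projperp G x1 y = (Bf G x2 y / Qf G x2) *s x2 + (Bf G x3 y / Qf G x3) *s x3"
    (is "_ = ?u")
proof -
  have "projperp G x1 y = projperp G x1 ((Bf G x1 y / Qf G x1) *s x1 + ?u)"
    using arg_cong[OF orthogonal_basis_expansion[OF assms, of y], of "projperp G x1"]
    by (simp only: add.assoc)
  also have "\<dots> = ?u"
    using orth nz(1) by (intro projperp_scale_add) (simp_all add: Bf_add_right Bf_scale_right)
  finally show ?thesis .
qed

context dyadic_field
begin

lemma mem_stdlat_3: "y \<in> stdlat v \<longleftrightarrow> val_ge v (y$1) 0 \<and> val_ge v (y$2) 0 \<and> val_ge v (y$3) 0"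
  for y :: "'a^3"
  unfolding stdlat_def by (simp add: forall_3 Oring_iff_val_ge)

lemma pid_eq_oideal:
  assumes "a \<in> S" "a \<noteq> 0" and divides: "\<And>s. s \<in> S \<Longrightarrow> val_ge v (s / a) 0"
  shows "pid v a = oideal v S"
proof (intro equalityI subsetI)
  fix y assume "y \<in> pid v a"
  then obtain c where "c \<in> Oring v" "y = c * a" unfolding pid_def by blast
  with \<open>a \<in> S\<close> show "y \<in> oideal v S" unfolding oideal_def
    by (intro CollectI exI[of _ "1::nat"] exI[of _ "\<lambda>_. c"] exI[of _ "\<lambda>_. a"]) simp
next
  fix y assume "y \<in> oideal v S"
  then obtain n :: nat and c s where cs: "\<forall>i<n. c i \<in> Oring v \<and> s i \<in> S"
    and y: "y = (\<Sum>i<n. c i * s i)"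
    unfolding oideal_def by blast
  have "val_ge v (\<Sum>i<n. c i * (s i / a)) 0"
    using cs divides by (intro val_ge_sum val_ge_mult_left) (auto simp: Oring_iff_val_ge)
  moreover have "y = (\<Sum>i<n. c i * (s i / a)) * a"
    unfolding y using \<open>a \<noteq> 0\<close> by (simp add: sum_distrib_right)
  ultimately show "y \<in> pid v a" unfolding pid_def by (auto simp: Oring_iff_val_ge)
qed

lemma bong_orthogonal_basis:
  fixes G :: "'a^3^3"
  assumes G: "symm G"
    and orth: "Bf G x1 x2 = 0" "Bf G x1 x3 = 0" "Bf G x2 x3 = 0"
    and nz: "Qf G x1 \<noteq> 0" "Qf G x2 \<noteq> 0" "Qf G x3 \<noteq> 0"
    and x1: "x1 \<in> L" "\<And>y. y \<in> L \<Longrightarrow> val_ge v (Qf G y / Qf G x1) 0"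
    and x2: "z \<in> L" "projperp G x1 z = x2"
    and x3: "u \<in> L" "Bf G x3 u = Qf G x3"
    and coeff: "\<And>y. y \<in> L \<Longrightarrow> val_ge v (Bf G x2 y / Qf G x2) 0 \<and> val_ge v (Bf G x3 y / Qf G x3) 0"
    and ratio: "val_ge v (Qf G x3 / Qf G x2) 0"
  shows "bong v G [x1, x2, x3] L"
proof -
  define c2 where "c2 y = Bf G x2 y / Qf G x2" for y
  define c3 where "c3 y = Bf G x3 y / Qf G x3" for y
  have orth23: "Bf G x2 (d3 *s x3) = 0" "Bf G x3 0 = 0" for d3
    using orth(3) by (simp_all add: Bf_scale_right) (simp add: Bf_def)
  have proj1: "projperp G x1 y = c2 y *s x2 + c3 y *s x3" for y
    unfolding c2_def c3_def by (rule projperp_orthogonal_basis[OF G orth nz])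
  have proj2: "projperp G x2 (d2 *s x2 + d3 *s x3) = d3 *s x3" for d2 d3
    by (rule projperp_scale_add[OF orth23(1) nz(2)])
  have proj3: "projperp G x3 (d3 *s x3) = 0" for d3
    using projperp_scale_add[OF orth23(2) nz(3), of d3] by simp
  let ?L1 = "projperp G x1 ` L" and ?L2 = "projperp G x2 ` projperp G x1 ` L"
  have L2: "?L2 = (\<lambda>y. c3 y *s x3) ` L" unfolding image_image proj1 proj2 ..
  have "c3 u = 1" using x3(2) nz(3) by (simp add: c3_def)
  then have "x3 \<in> ?L2" unfolding L2 using x3(1) by (intro image_eqI[of _ _ u]) simp_all
  moreover have "x2 \<in> ?L1" using x2 by blast
  moreover have "pid v (Qf G x1) = oideal v (Qf G ` L)"
    using x1 nz(1) by (intro pid_eq_oideal) auto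
  moreover have "pid v (Qf G x2) = oideal v (Qf G ` ?L1)"
  proof (rule pid_eq_oideal)
    fix q assume "q \<in> Qf G ` ?L1"
    then obtain y where y: "y \<in> L" "q = Qf G (c2 y *s x2 + c3 y *s x3)" unfolding proj1 by blast
    then have "q / Qf G x2 = (c2 y)\<^sup>2 + (c3 y)\<^sup>2 * (Qf G x3 / Qf G x2)"
      using nz(2) by (simp add: Qf_scale_add[OF G] orth(3) field_simps)
    also have "val_ge v \<dots> 0"
      using coeff[OF y(1)] ratio unfolding c2_def c3_def
      by (intro val_ge_add val_ge_mult_left val_ge_power_0) auto
    finally show "val_ge v (q / Qf G x2) 0" .
  qed (use \<open>x2 \<in> ?L1\<close> nz in auto)
  moreover have "pid v (Qf G x3) = oideal v (Qf G ` ?L2)"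
  proof (rule pid_eq_oideal)
    fix q assume "q \<in> Qf G ` ?L2"
    then obtain y where y: "y \<in> L" "q = Qf G (c3 y *s x3)" unfolding L2 by blast
    then have "q / Qf G x3 = (c3 y)\<^sup>2" using nz(3) by (simp add: Qf_scale)
    then show "val_ge v (q / Qf G x3) 0"
      using coeff[OF y(1)] val_ge_power_0 unfolding c3_def by simp
  qed (use \<open>x3 \<in> ?L2\<close> nz in auto)
  moreover have "projperp G x3 ` ?L2 = {0}" unfolding L2 unfolding image_image proj3 using x1(1) by blast
  ultimately show ?thesis using x1(1) nz by simp
qed

end

section \<open>The construction\<close>

definition qpolar :: "'a::comm_ring_1 \<Rightarrow> 'a \<Rightarrow> 'a \<Rightarrow> 'a \<Rightarrow> 'a \<Rightarrow> 'a" where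
  "qpolar \<rho> a b a' b' = 2 * a * a' + a * b' + b * a' + 2 * \<rho> * b * b'"

lemma qpolar_self: "qpolar \<rho> a b a b = 2 * qnorm \<rho> a b"
  unfolding qpolar_def qnorm_def by (simp add: algebra_simps power2_eq_square)

lemma qpolar_commute: "qpolar \<rho> a b a' b' = qpolar \<rho> a' b' a b"
  unfolding qpolar_def by (simp add: algebra_simps)

lemma qpolar_scale_left: "qpolar \<rho> (k * a) (k * b) a' b' = k * qpolar \<rho> a b a' b'"
  unfolding qpolar_def by (simp add: algebra_simps)

lemma qpolar_scale_right: "qpolar \<rho> a b (k * a') (k * b') = k * qpolar \<rho> a b a' b'"
  unfolding qpolar_def by (simp add: algebra_simps)

text \<open>Multiplicativity of the norm form of \<open>F[\<omega>]\<close>, \<open>\<omega>\<^sup>2 = \<omega> - \<rho>\<close>, in which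
  \<open>(a + b\<omega>)(a' + b'\<omega>) = (a a' - \<rho> b b') + (a b' + b a' + b b')\<omega>\<close>.\<close>

lemma qpolar_mult:
  "qpolar \<rho> (a * a' - \<rho> * b * b') (a * b' + b * a' + b * b') (a * a'' - \<rho> * b * b'') (a * b'' + b * a'' + b * b'')
     = qnorm \<rho> a b * qpolar \<rho> a' b' a'' b''"
  unfolding qpolar_def qnorm_def by (simp add: algebra_simps power2_eq_square)

lemma qpolar_mult_one:
  "qpolar \<rho> a b (a * a' - \<rho> * b * b') (a * b' + b * a' + b * b') = qnorm \<rho> a b * qpolar \<rho> 1 0 a' b'"
  using qpolar_mult[where a' = 1 and b' = 0] by simp

lemma symm_gram_lhs: "symm (gram_lhs \<pi> \<rho> \<delta>)"
  unfolding symm_def gram_lhs_def by (simp add: forall_3)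

lemma Bf_gram_lhs:
  assumes "(2::'a::field) \<noteq> 0"
  shows "Bf (gram_lhs \<pi> \<rho> \<delta>) x y
    = \<pi> / 2 * qpolar \<rho> (x$1) (x$2) (y$1) (y$2) + (1 - 4 * \<rho>) * \<delta> * x$3 * y$3"
  using assms unfolding Bf_def gram_lhs_def qpolar_def by (simp add: sum_3 field_simps)

context dyadic_field
begin

lemma val_ge_qpolar:
  assumes "val_ge v \<rho> 0" "val_ge v a 0" "val_ge v b 0" "val_ge v a' 0" "val_ge v b' 0"
  shows "val_ge v (qpolar \<rho> a b a' b') 0"
  unfolding qpolar_def using assms val_ge_two val_ge_mono[OF val_ge_two]
  by (intro val_ge_add val_ge_mult_left) auto

end

text \<open>\<open>m\<close> stands for \<open>\<pi>^(2e - 1)\<close> and \<open>\<nu>\<close> for the unit \<open>2 / \<pi>^e\<close>, so that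
  \<open>\<kappa> = s\<^sup>2 (1 + r m)\<close> and \<open>\<kappa>\<^sup># = 1 + 4 \<rho> / (r m)\<close>.\<close>

locale bong_construction = dyadic_field v for v :: "'a::field \<Rightarrow> int" +
  fixes \<pi> m \<nu> \<rho> \<delta> r s :: 'a
  assumes pi: "\<pi> \<noteq> 0" "v \<pi> = 1"
    and nu: "is_unit v \<nu>" "\<nu>\<^sup>2 * \<pi> * m = 4"
    and m_half: "val_ge v (m / 2) 0"
    and units: "is_unit v \<rho>" "is_unit v \<delta>" "is_unit v r" "is_unit v s"
begin

definition "g = r * m"
definition "\<Delta> = 1 - 4 * \<rho>"
definition "\<kappa> = s\<^sup>2 * (1 + g)"
definition "ksharp = 1 + 4 * \<rho> / g"
definition "a1 = \<delta> * ksharp"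
definition "a2 = - (a1 * \<kappa> * \<pi> / m)"
definition "a3 = \<delta> * \<kappa>"
definition "w = \<nu>\<^sup>2 * \<rho> * \<delta> * (1 + g) / r"
definition "c = - (\<nu>\<^sup>2 * \<pi> * \<rho>\<^sup>2) / (\<Delta> * r)"

lemma params_nonzero: "m \<noteq> 0" "\<nu> \<noteq> 0" "\<rho> \<noteq> 0" "\<delta> \<noteq> 0" "r \<noteq> 0" "s \<noteq> 0"
  using nu units four_neq_zero by (auto simp: is_unit_def)

lemma val_ge_pi: "val_ge v \<pi> 1"
  using pi by (simp add: val_ge_def)

lemma val_ge_m: "val_ge v m 1"
  using val_ge_mult[OF m_half val_ge_two] params_nonzero two_neq_zero by simp

lemma val_ge_m_div_pi: "val_ge v (m / \<pi>) 0"
  using val_ge_m pi params_nonzero by (auto simp: val_ge_def val_divide)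

lemma val_ge_pi_m_div_4: "val_ge v (\<pi> * m / 4) 0"
proof -
  have "\<pi> * m / 4 = inverse (\<nu>\<^sup>2)" using nu(2) four_neq_zero params_nonzero by (auto simp: field_simps)
  then show ?thesis using val_ge_inverse_unit[OF is_unit_power[OF nu(1)]] by (simp only:)
qed

lemma val_ge_4_rho: "val_ge v (4 * \<rho>) 1"
proof -
  have "val_ge v (\<nu>\<^sup>2 * \<rho> * \<pi> * m) (0 + 1 + 1)"
    using nu(1) units(1) val_ge_pi val_ge_m
    by (intro val_ge_mult val_ge_mult_left is_unit_val_ge is_unit_power)
  moreover have "\<nu>\<^sup>2 * \<rho> * \<pi> * m = 4 * \<rho>" using nu(2) by (simp add: ac_simps)
  ultimately show ?thesis by (auto elim: val_ge_mono)
qed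

lemma val_ge_g: "val_ge v g 1"
  unfolding g_def using val_ge_mult_left[OF is_unit_val_ge[OF units(3)] val_ge_m] .

lemma g_nonzero: "g \<noteq> 0"
  unfolding g_def using params_nonzero by simp

lemma is_unit_1_plus_g: "is_unit v (1 + g)"
  using is_unit_add_small[OF is_unit_one val_ge_g] .

lemma is_unit_Delta: "is_unit v \<Delta>"
  unfolding \<Delta>_def using is_unit_add_small[OF is_unit_one, of "- (4 * \<rho>)"] val_ge_4_rho by simp

lemma is_unit_kappa: "is_unit v \<kappa>"
  unfolding \<kappa>_def using units(4) is_unit_1_plus_g by (intro is_unit_mult is_unit_power)

lemma val_ge_params: "val_ge v \<pi> 0" "val_ge v \<rho> 0" "val_ge v \<delta> 0" "val_ge v s 0" "val_ge v \<Delta> 0"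
  using val_ge_mono[OF val_ge_pi] units is_unit_Delta by (auto intro: is_unit_val_ge)

lemma ksharp_eq: "ksharp = 1 + \<nu>\<^sup>2 * \<rho> / r * \<pi>"
proof -
  have "4 * \<rho> / g = \<nu>\<^sup>2 * \<pi> * m * \<rho> / (r * m)" unfolding g_def nu(2) ..
  then show ?thesis unfolding ksharp_def using params_nonzero by (simp add: field_simps)
qed

lemma is_unit_ksharp: "is_unit v ksharp"
proof -
  have "val_ge v (\<nu>\<^sup>2 * \<rho> / r * \<pi>) (0 + 1)"
    using nu(1) units val_ge_pi unfolding divide_inverse
    by (intro val_ge_mult val_ge_mult_left is_unit_val_ge is_unit_power val_ge_inverse_unit)
  then show ?thesis unfolding ksharp_eq by (intro is_unit_add_small is_unit_one) simp
qed

lemma is_unit_w: "is_unit v w"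
  unfolding w_def using nu(1) units is_unit_1_plus_g
  by (intro is_unit_divide is_unit_mult is_unit_power)

lemma val_ge_c: "val_ge v c 1"
proof -
  have "val_ge v (\<nu>\<^sup>2 * \<rho>\<^sup>2 / (\<Delta> * r) * \<pi>) (0 + 1)"
    using nu(1) units is_unit_Delta val_ge_pi
    by (intro val_ge_mult is_unit_val_ge is_unit_divide is_unit_mult is_unit_power)
  then show ?thesis unfolding c_def by (simp add: ac_simps)
qed

lemma w_eq: "w * g * \<pi> = 4 * \<rho> * \<delta> * (1 + g)"
  unfolding w_def g_def nu(2)[symmetric] using params_nonzero by (simp add: field_simps)

lemma c_eq: "c * \<Delta> * g = - 4 * \<rho>\<^sup>2"
  unfolding c_def g_def nu(2)[symmetric] using params_nonzero is_unit_nonzero[OF is_unit_Delta]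
  by (simp add: field_simps)

lemma a1_eq: "a1 * g = \<delta> * (g + 4 * \<rho>)"
  unfolding a1_def ksharp_def using g_nonzero by (simp add: field_simps)

end

text \<open>With \<open>\<mu> = \<alpha> + \<beta>\<omega>\<close> of norm \<open>w\<close>, the binary components of \<open>z\<close> and \<open>x3\<close> are
  \<open>(z1, z2) = \<mu> k (x - \<omega>)\<close> and \<open>(t1, t2) = \<mu> (Ta + Tb \<omega>)\<close>\<close>

locale bong_witnesses = bong_construction +
  fixes \<alpha> \<beta> x :: 'a
  assumes alpha_beta: "val_ge v \<alpha> 0" "val_ge v \<beta> 0" "qnorm \<rho> \<alpha> \<beta> = w"
    and root: "val_ge v x 0" "x\<^sup>2 - x = c"
begin

abbreviation "G \<equiv> gram_lhs \<pi> \<rho> \<delta>"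

definition "k = \<nu> * a1 * s * (1 + g) / w"
definition "z1 = \<alpha> * (k * x) - \<rho> * \<beta> * (- k)"
definition "z2 = \<alpha> * (- k) + \<beta> * (k * x) + \<beta> * (- k)"
definition "Ta = s * (x - 2 * \<rho>) / \<rho>"
definition "Tb = - (s * (2 * x - 1)) / \<rho>"
definition "t1 = \<alpha> * Ta - \<rho> * \<beta> * Tb"
definition "t2 = \<alpha> * Tb + \<beta> * Ta + \<beta> * Tb"

definition "x1 = (vector [\<alpha>, \<beta>, 1] :: 'a^3)"
definition "z = (vector [z1, z2, 0] :: 'a^3)"
definition "x2 = projperp G x1 z"
definition "x3 = (vector [g / 2 * t1, g / 2 * t2, - ((1 + g) * s)] :: 'a^3)"

lemma Bf_G: "Bf G a b = \<pi> / 2 * qpolar \<rho> (a$1) (a$2) (b$1) (b$2) + \<Delta> * \<delta> * a$3 * b$3"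
  unfolding \<Delta>_def by (rule Bf_gram_lhs[OF two_neq_zero])

lemma Qf_x1: "Qf G x1 = a1"
proof -
  have "Qf G x1 = \<pi> * w + \<Delta> * \<delta>"
    unfolding Qf_def Bf_G x1_def using two_neq_zero by (simp add: qpolar_self alpha_beta(3))
  also have "\<dots> = a1"
  proof -
    have "(\<pi> * w + \<Delta> * \<delta>) * g = a1 * g"
      using w_eq unfolding a1_eq \<Delta>_def by (simp add: algebra_simps)
    then show ?thesis using g_nonzero by simp
  qed
  finally show ?thesis .
qed

lemma Bf_x1_z: "Bf G x1 z = \<pi> / 2 * w * (2 * k * x - k)"
proof -
  have "Bf G x1 z = \<pi> / 2 * qpolar \<rho> \<alpha> \<beta> z1 z2" unfolding Bf_G x1_def z_def by simp
  also have "qpolar \<rho> \<alpha> \<beta> z1 z2 = w * qpolar \<rho> 1 0 (k * x) (- k)"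
    unfolding z1_def z2_def qpolar_mult_one alpha_beta(3) ..
  finally show ?thesis by (simp add: qpolar_def algebra_simps)
qed

lemma Qf_z: "Qf G z = \<pi> * w * k\<^sup>2 * (c + \<rho>)"
proof -
  have "qpolar \<rho> z1 z2 z1 z2 = w * qpolar \<rho> (k * x) (- k) (k * x) (- k)"
    unfolding z1_def z2_def qpolar_mult alpha_beta(3) ..
  also have "qpolar \<rho> (k * x) (- k) (k * x) (- k) = 2 * k\<^sup>2 * (c + \<rho>)"
    unfolding qpolar_self qnorm_def root(2)[symmetric] by (simp add: power2_eq_square algebra_simps)
  finally show ?thesis unfolding Qf_def Bf_G z_def using two_neq_zero by simp
qed

lemma is_unit_a1: "is_unit v a1"
  unfolding a1_def using units(2) is_unit_ksharp by (rule is_unit_mult)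

lemma a1_nonzero: "a1 \<noteq> 0"
  using is_unit_a1 by (rule is_unit_nonzero)

lemma a2_nonzero: "a2 \<noteq> 0"
  unfolding a2_def using a1_nonzero is_unit_nonzero[OF is_unit_kappa] pi(1) params_nonzero by simp

lemma g_plus_4rho_nonzero: "g + 4 * \<rho> \<noteq> 0"
  using a1_nonzero a1_eq g_nonzero params_nonzero by auto

lemma pi_w_eq: "\<pi> * w * (g + 4 * \<rho>) = 4 * \<rho> * (1 + g) * a1"
proof -
  have "\<pi> * w * (g + 4 * \<rho>) * g = (w * g * \<pi>) * (g + 4 * \<rho>)" by (simp add: ac_simps)
  also have "\<dots> = 4 * \<rho> * \<delta> * (1 + g) * (g + 4 * \<rho>)" by (simp only: w_eq)
  also have "\<dots> = 4 * \<rho> * (1 + g) * (a1 * g)" unfolding a1_eq by (simp only: ac_simps)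
  finally show ?thesis using g_nonzero by (simp add: ac_simps)
qed

lemma pi_w_div_4a1: "\<pi> * w / (4 * a1) = \<rho> * (1 + g) / (g + 4 * \<rho>)"
  using pi_w_eq g_plus_4rho_nonzero a1_nonzero four_neq_zero by (simp add: field_simps)

lemma Qf_z_minus_projection:
  "Qf G z - (Bf G x1 z)\<^sup>2 / a1 = - (\<pi> * w * k\<^sup>2 * \<rho>) / (g + 4 * \<rho>)"
proof -
  have B: "(Bf G x1 z)\<^sup>2 = \<pi>\<^sup>2 * w\<^sup>2 * k\<^sup>2 * (4 * c + 1) / 4"
    unfolding Bf_x1_z root(2)[symmetric] using four_neq_zero by (simp add: power2_eq_square field_simps)
  have "Qf G z - (Bf G x1 z)\<^sup>2 / a1 = \<pi> * w * k\<^sup>2 * ((c + \<rho>) - \<pi> * w / (4 * a1) * (4 * c + 1))"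
    unfolding Qf_z B using a1_nonzero four_neq_zero by (simp add: field_simps power2_eq_square)
  \<comment> \<open>the bracket collapses by \<open>c \<Delta> g = -4\<rho>\<^sup>2\<close>\<close>
  also have "(c + \<rho>) - \<pi> * w / (4 * a1) * (4 * c + 1) = - \<rho> / (g + 4 * \<rho>)"
  proof -
    have "(c + \<rho>) * (g + 4 * \<rho>) - \<rho> * (1 + g) * (4 * c + 1) = c * \<Delta> * g + 4 * \<rho>\<^sup>2 - \<rho>"
      unfolding \<Delta>_def by (simp add: algebra_simps power2_eq_square)
    then show ?thesis unfolding pi_w_div_4a1 c_eq using g_plus_4rho_nonzero by (simp add: field_simps)
  qed
  finally show ?thesis by simp
qed

lemma a2_eq: "a2 = - (\<pi> * w * k\<^sup>2 * \<rho>) / (g + 4 * \<rho>)"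
proof -
  have "w * k\<^sup>2 = \<nu>\<^sup>2 * a1\<^sup>2 * s\<^sup>2 * (1 + g)\<^sup>2 / w"
    unfolding k_def using is_unit_nonzero[OF is_unit_w] by (simp add: power2_eq_square)
  then have "- (\<pi> * w * k\<^sup>2 * \<rho>) / (g + 4 * \<rho>)
      = - (\<pi> * \<nu>\<^sup>2 * a1\<^sup>2 * s\<^sup>2 * (1 + g)\<^sup>2 * \<rho>) / (w * (g + 4 * \<rho>))"
    by (simp add: ac_simps)
  also have "w * (g + 4 * \<rho>) = 4 * \<rho> * (1 + g) * a1 / \<pi>"
    using pi_w_eq pi(1) by (simp add: field_simps)
  also have "- (\<pi> * \<nu>\<^sup>2 * a1\<^sup>2 * s\<^sup>2 * (1 + g)\<^sup>2 * \<rho>) / (4 * \<rho> * (1 + g) * a1 / \<pi>)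
      = - ((\<nu>\<^sup>2 * \<pi> * m) * (a1 * \<kappa> * \<pi> / m)) / 4"
  proof -
    \<comment> \<open>naming \<open>1 + g\<close> keeps the simplifier from distributing it\<close>
    obtain h where h: "h = 1 + g" "h \<noteq> 0" using is_unit_nonzero[OF is_unit_1_plus_g] by blast
    show ?thesis unfolding \<kappa>_def h(1)[symmetric]
      using h(2) pi(1) params_nonzero a1_nonzero four_neq_zero by (simp add: field_simps power2_eq_square)
  qed
  also have "\<dots> = a2" unfolding nu(2) a2_def using four_neq_zero by simp
  finally show ?thesis ..
qed

lemma Qf_x2: "Qf G x2 = a2"
proof -
  have "Qf G x2 = Qf G z - (Bf G x1 z)\<^sup>2 / a1"
    unfolding x2_def using Qf_projperp[OF symm_gram_lhs, of \<pi> \<rho> \<delta> x1 z] Qf_x1 a1_nonzero by simp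
  then show ?thesis unfolding Qf_z_minus_projection a2_eq .
qed


lemma Bf_x3: "Bf G x3 y = \<pi> * g / 4 * qpolar \<rho> t1 t2 (y$1) (y$2) - \<Delta> * \<delta> * (1 + g) * s * y$3"
proof -
  have "Bf G x3 y = \<pi> / 2 * qpolar \<rho> (g / 2 * t1) (g / 2 * t2) (y$1) (y$2) - \<Delta> * \<delta> * (1 + g) * s * y$3"
    unfolding Bf_G x3_def by simp
  then show ?thesis unfolding qpolar_scale_left using four_neq_zero by (simp add: field_simps)
qed

lemma qpolar_t_alpha_beta: "qpolar \<rho> t1 t2 \<alpha> \<beta> = w * (s * \<Delta> / \<rho>)"
proof -
  have "qpolar \<rho> t1 t2 \<alpha> \<beta> = qpolar \<rho> \<alpha> \<beta> t1 t2" by (rule qpolar_commute)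
  also have "\<dots> = w * qpolar \<rho> 1 0 Ta Tb"
    unfolding t1_def t2_def qpolar_mult_one alpha_beta(3) ..
  also have "qpolar \<rho> 1 0 Ta Tb = s * \<Delta> / \<rho>"
    unfolding qpolar_def Ta_def Tb_def \<Delta>_def using params_nonzero by (simp add: field_simps)
  finally show ?thesis .
qed

lemma Bf_x1_x3: "Bf G x1 x3 = 0"
proof -
  have "Bf G x1 x3 = Bf G x3 x1" by (rule Bf_commute[OF symm_gram_lhs])
  also have "\<dots> = \<pi> * g / 4 * qpolar \<rho> t1 t2 \<alpha> \<beta> - \<Delta> * \<delta> * (1 + g) * s"
    unfolding Bf_x3 by (simp add: x1_def)
  also have "\<pi> * g / 4 * qpolar \<rho> t1 t2 \<alpha> \<beta> = (w * g * \<pi>) * s * \<Delta> / (4 * \<rho>)"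
    unfolding qpolar_t_alpha_beta using four_neq_zero params_nonzero by (simp add: field_simps)
  also have "\<dots> = \<Delta> * \<delta> * (1 + g) * s" unfolding w_eq using params_nonzero four_neq_zero by (simp add: field_simps)
  finally show ?thesis by simp
qed

lemma Bf_z_x3: "Bf G z x3 = 0"
proof -
  have "qpolar \<rho> t1 t2 z1 z2 = w * qpolar \<rho> Ta Tb (k * x) (- k)"
    unfolding t1_def t2_def z1_def z2_def qpolar_mult alpha_beta(3) ..
  also have "qpolar \<rho> Ta Tb (k * x) (- k) = 0"
    unfolding qpolar_def Ta_def Tb_def using params_nonzero by (simp add: field_simps)
  finally have "qpolar \<rho> t1 t2 z1 z2 = 0" by simp
  then show ?thesis unfolding Bf_commute[OF symm_gram_lhs, where x = z] Bf_x3 by (simp add: z_def)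
qed

lemma Bf_x2_x3: "Bf G x2 x3 = 0"
  unfolding x2_def Bf_projperp_left Bf_z_x3 Bf_x1_x3 by simp

lemma Bf_x1_x2: "Bf G x1 x2 = 0"
  unfolding x2_def using Bf_projperp_self[of G x1 z] Qf_x1 a1_nonzero by simp

lemma Qf_x3: "Qf G x3 = a3"
proof -
  have "qpolar \<rho> Ta Tb Ta Tb * \<rho>\<^sup>2 = - 2 * s\<^sup>2 * \<Delta> * (c + \<rho>)"
    unfolding qpolar_def Ta_def Tb_def \<Delta>_def root(2)[symmetric] using params_nonzero
    by (simp add: field_simps power2_eq_square)
  then have "qpolar \<rho> Ta Tb Ta Tb = - 2 * s\<^sup>2 * \<Delta> * (c + \<rho>) / \<rho>\<^sup>2"
    using params_nonzero by (simp add: field_simps)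
  then have tt: "qpolar \<rho> t1 t2 t1 t2 = - 2 * w * s\<^sup>2 * \<Delta> * (c + \<rho>) / \<rho>\<^sup>2"
    unfolding t1_def t2_def qpolar_mult alpha_beta(3) by simp
  have "Qf G x3 = \<pi> * g / 4 * qpolar \<rho> t1 t2 (g / 2 * t1) (g / 2 * t2) + \<Delta> * \<delta> * (1 + g)\<^sup>2 * s\<^sup>2"
    unfolding Qf_def Bf_x3 by (simp add: x3_def power2_eq_square)
  also have "qpolar \<rho> t1 t2 (g / 2 * t1) (g / 2 * t2) = g / 2 * (- 2 * w * s\<^sup>2 * \<Delta> * (c + \<rho>) / \<rho>\<^sup>2)"
    unfolding qpolar_scale_right tt ..
  also have "\<pi> * g / 4 * (g / 2 * (- 2 * w * s\<^sup>2 * \<Delta> * (c + \<rho>) / \<rho>\<^sup>2))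
      = - (w * g * \<pi>) * g * s\<^sup>2 * \<Delta> * (c + \<rho>) / (4 * \<rho>\<^sup>2)"
    using four_neq_zero two_neq_zero eight_neq_zero params_nonzero by (simp add: field_simps)
  also have "- (w * g * \<pi>) * g * s\<^sup>2 * \<Delta> * (c + \<rho>) / (4 * \<rho>\<^sup>2) + \<Delta> * \<delta> * (1 + g)\<^sup>2 * s\<^sup>2
      = \<delta> * (1 + g) * s\<^sup>2 * (\<Delta> * (1 + g) - (c * \<Delta> * g) / \<rho> - \<Delta> * g)"
    unfolding w_eq using params_nonzero four_neq_zero by (simp add: field_simps power2_eq_square)
  also have "\<Delta> * (1 + g) - (c * \<Delta> * g) / \<rho> - \<Delta> * g = 1"
    unfolding c_eq unfolding \<Delta>_def using params_nonzero by (simp add: field_simps power2_eq_square)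
  finally show ?thesis unfolding a3_def \<kappa>_def by (simp add: ac_simps)
qed


lemma val_ge_witnesses: "val_ge v k 0" "val_ge v z1 0" "val_ge v z2 0" "val_ge v t1 0" "val_ge v t2 0"
proof -
  have int: "val_ge v \<rho> 0" "val_ge v \<nu> 0" "val_ge v s 0" "val_ge v a1 0" "val_ge v (1 + g) 0"
    "val_ge v (inverse w) 0" "val_ge v (inverse \<rho>) 0" "val_ge v 2 0"
    using units nu(1) is_unit_w is_unit_1_plus_g is_unit_ksharp val_ge_mono[OF val_ge_two]
    by (auto simp: a1_def intro: is_unit_val_ge val_ge_inverse_unit is_unit_mult)
  show k: "val_ge v k 0" unfolding k_def divide_inverse using int by (intro val_ge_mult_left) auto
  show "val_ge v z1 0" "val_ge v z2 0" unfolding z1_def z2_def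
    using k int alpha_beta root by (intro val_ge_add val_ge_diff val_ge_mult_left; simp)+
  have "val_ge v Ta 0" "val_ge v Tb 0" unfolding Ta_def Tb_def divide_inverse
    using int root val_ge_one by (intro val_ge_mult_left val_ge_diff; simp)+
  then show "val_ge v t1 0" "val_ge v t2 0" unfolding t1_def t2_def
    using int alpha_beta by (intro val_ge_add val_ge_diff val_ge_mult_left; simp)+
qed


lemma x1_mem_stdlat: "x1 \<in> stdlat v"
  unfolding mem_stdlat_3 x1_def using alpha_beta val_ge_one by simp

lemma z_mem_stdlat: "z \<in> stdlat v"
  unfolding mem_stdlat_3 z_def using val_ge_witnesses by simp

lemma val_ge_Qf_stdlat:
  assumes "y \<in> stdlat v" shows "val_ge v (Qf G y) 0"
proof -
  have "Qf G y = \<pi> * qnorm \<rho> (y$1) (y$2) + \<Delta> * \<delta> * (y$3)\<^sup>2"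
    unfolding Qf_def Bf_G qpolar_self using two_neq_zero by (simp add: power2_eq_square)
  also have "val_ge v \<dots> 0"
    using assms val_ge_params unfolding mem_stdlat_3 qnorm_def
    by (intro val_ge_add val_ge_mult_left val_ge_power_0) auto
  finally show ?thesis .
qed

lemma is_unit_a3: "is_unit v a3"
  unfolding a3_def using units(2) is_unit_kappa by (rule is_unit_mult)

lemma val_ge_coeff_x3:
  assumes "y \<in> stdlat v" shows "val_ge v (Bf G x3 y / a3) 0"
proof -
  have "\<pi> * g / 4 = r * (\<pi> * m / 4)" unfolding g_def by simp
  then have "val_ge v (\<pi> * g / 4) 0"
    using val_ge_mult_left[OF is_unit_val_ge[OF units(3)] val_ge_pi_m_div_4] by (simp only:)
  then have "val_ge v (Bf G x3 y) 0" unfolding Bf_x3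
    using assms val_ge_params val_ge_witnesses is_unit_val_ge[OF is_unit_1_plus_g] unfolding mem_stdlat_3
    by (intro val_ge_diff val_ge_mult_left val_ge_qpolar) auto
  then show ?thesis unfolding divide_inverse using val_ge_inverse_unit[OF is_unit_a3] by (rule val_ge_mult_right)
qed

lemma val_ge_coeff_x2:
  assumes "y \<in> stdlat v" shows "val_ge v (Bf G x2 y / a2) 0"
proof -
  define Pzy where "Pzy = qpolar \<rho> z1 z2 (y$1) (y$2)"
  define Pxz where "Pxz = qpolar \<rho> \<alpha> \<beta> z1 z2"
  define Pxy where "Pxy = qpolar \<rho> \<alpha> \<beta> (y$1) (y$2)"
  have int: "val_ge v Pzy 0" "val_ge v Pxz 0" "val_ge v Pxy 0"
    using assms alpha_beta val_ge_witnesses val_ge_params unfolding Pzy_def Pxz_def Pxy_def mem_stdlat_3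
    by (auto intro!: val_ge_qpolar)
  have B: "Bf G x2 y = \<pi> / 2 * Pzy - \<pi> / 2 * Pxz / a1 * (\<pi> / 2 * Pxy + \<Delta> * \<delta> * y$3)"
    unfolding x2_def Bf_projperp_left Qf_x1 unfolding Bf_G Pzy_def Pxz_def Pxy_def
    by (simp add: x1_def z_def)
  define C where "C = - (m / 2 * Pzy) * inverse (a1 * \<kappa>)
      + Pxz * inverse (a1\<^sup>2 * \<kappa>) * (\<pi> * m / 4 * Pxy + m / 2 * \<Delta> * \<delta> * y$3)"
  have aC: "a2 * C = Bf G x2 y"
    unfolding B a2_def C_def using a1_nonzero is_unit_nonzero[OF is_unit_kappa] pi(1) params_nonzero
      two_neq_zero four_neq_zero eight_neq_zero sixteen_neq_zero
    by (simp add: field_simps power2_eq_square)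
  have "Bf G x2 y / a2 = C"
    unfolding aC[symmetric] using a2_nonzero by (rule nonzero_mult_div_cancel_left)
  also have "val_ge v C 0"
  proof -
    have "val_ge v (inverse (a1 * \<kappa>)) 0" "val_ge v (inverse (a1\<^sup>2 * \<kappa>)) 0"
      using is_unit_a1 is_unit_kappa by (metis val_ge_inverse_unit is_unit_mult is_unit_power)+
    moreover have "val_ge v (m / 2 * Pzy) 0" using m_half int(1) by (rule val_ge_mult_right)
    ultimately show ?thesis
      using int m_half val_ge_pi_m_div_4 val_ge_params assms unfolding mem_stdlat_3 C_def
      by (intro val_ge_add val_ge_mult_left val_ge_mult_right) (auto simp del: minus_mult_left)
  qed
  finally show ?thesis .
qed

lemma val_ge_a3_div_a2: "val_ge v (a3 / a2) 0"
proof -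
  have "a3 / a2 = - (m / \<pi> * inverse ksharp)"
    unfolding a3_def a2_def a1_def using params_nonzero pi(1) is_unit_nonzero[OF is_unit_kappa]
      is_unit_nonzero[OF is_unit_ksharp]
    by (simp add: field_simps)
  then show ?thesis
    using val_ge_mult_right[OF val_ge_m_div_pi val_ge_inverse_unit[OF is_unit_ksharp]] by simp
qed

definition "u = (vector [0, 0, - (s / \<Delta>)] :: 'a^3)"

lemma Bf_x3_u: "Bf G x3 u = a3"
  unfolding Bf_x3 u_def a3_def \<kappa>_def using is_unit_nonzero[OF is_unit_Delta]
  by (simp add: qpolar_def field_simps power2_eq_square)

lemma u_mem_stdlat: "u \<in> stdlat v"
  unfolding mem_stdlat_3 u_def divide_inverse
  using val_ge_mult_left[OF val_ge_params(4) val_ge_inverse_unit[OF is_unit_Delta]] by simp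


lemma bong_stdlat: "bong v G [x1, x2, x3] (stdlat v)"
proof (rule bong_orthogonal_basis)
  show "Qf G x1 \<noteq> 0" "Qf G x2 \<noteq> 0" "Qf G x3 \<noteq> 0"
    using a1_nonzero a2_nonzero is_unit_nonzero[OF is_unit_a3] by (simp_all add: Qf_x1 Qf_x2 Qf_x3)
  show "val_ge v (Qf G y / Qf G x1) 0" if "y \<in> stdlat v" for y
    unfolding Qf_x1 divide_inverse
    using val_ge_Qf_stdlat[OF that] val_ge_inverse_unit[OF is_unit_a1] by (rule val_ge_mult_right)
  show "val_ge v (Bf G x2 y / Qf G x2) 0 \<and> val_ge v (Bf G x3 y / Qf G x3) 0" if "y \<in> stdlat v" for y
    unfolding Qf_x2 Qf_x3 using val_ge_coeff_x2[OF that] val_ge_coeff_x3[OF that] ..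
  show "val_ge v (Qf G x3 / Qf G x2) 0" unfolding Qf_x2 Qf_x3 by (rule val_ge_a3_div_a2)
  show "Bf G x3 u = Qf G x3" unfolding Qf_x3 by (rule Bf_x3_u)
qed (use symm_gram_lhs Bf_x1_x2 Bf_x1_x3 Bf_x2_x3 x1_mem_stdlat z_mem_stdlat u_mem_stdlat x2_def in auto)

end

context bong_construction
begin

theorem exists_bong:
  "\<exists>(G :: 'a^3^3) M \<sigma> x1 x2 x3. symm G \<and> bong v G [x1, x2, x3] M \<and>
     Qf G x1 = a1 \<and> Qf G x2 = a2 \<and> Qf G x3 = a3 \<and> lattice_iso (gram_lhs \<pi> \<rho> \<delta>) G \<sigma> (stdlat v) M"
proof -
  obtain \<alpha> \<beta> where \<alpha>\<beta>: "val_ge v \<alpha> 0" "val_ge v \<beta> 0" "qnorm \<rho> \<alpha> \<beta> = w"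
    using qnorm_represents_unit[OF units(1) is_unit_w] by blast
  obtain y where y: "val_ge v y 1" "y\<^sup>2 + y = c" using artin_schreier_root[OF val_ge_c] by blast
  have "val_ge v (- y) 0" "(- y)\<^sup>2 - (- y) = c" using y val_ge_mono by auto
  with \<alpha>\<beta> interpret bong_witnesses v \<pi> m \<nu> \<rho> \<delta> r s \<alpha> \<beta> "- y"
    by unfold_locales
  have "lattice_iso G G id (stdlat v) (stdlat v)" by (simp add: lattice_iso_def)
  then show ?thesis using symm_gram_lhs bong_stdlat Qf_x1 Qf_x2 Qf_x3 by blast
qed

end

lemma (in dyadic_field) bong_construction_uniformizer:
  assumes unif: "\<pi> \<noteq> 0" "v \<pi> = 1" and e_def: "e = nat (v 2)"
    and units: "is_unit v \<rho>" "is_unit v \<delta>" "is_unit v r" "is_unit v s"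
  shows "bong_construction v \<pi> (\<pi> ^ (2 * e - 1)) (2 / \<pi> ^ e) \<rho> \<delta> r s"
proof
  have e: "v 2 = int e" "1 \<le> e" using e_def val_two_pos by auto
  have "(\<pi> ^ e)\<^sup>2 = \<pi> * \<pi> ^ (2 * e - 1)"
    using e(2) by (simp flip: power_Suc power_mult add: mult.commute)
  then show "(2 / \<pi> ^ e)\<^sup>2 * \<pi> * \<pi> ^ (2 * e - 1) = 4"
    unfolding power_divide using unif(1) by simp
  show "is_unit v (2 / \<pi> ^ e)"
    unfolding is_unit_def using unif two_neq_zero e(1) by (simp add: val_divide val_power)
  show "val_ge v (\<pi> ^ (2 * e - 1) / 2) 0"
    unfolding val_ge_def using unif two_neq_zero e by (simp add: val_divide val_power of_nat_diff)
qed (use unif units in auto)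

theorem lemma3p9:
  fixes v :: "'a::field \<Rightarrow> int" and \<pi> \<rho> \<kappa> \<delta> r s :: 'a and e :: nat
  assumes F: "dyadic_local_field v"
    and unif: "\<pi> \<noteq> 0" "v \<pi> = 1"
    and e_def: "e = nat (v 2)"
    and rho: "is_unit v \<rho>" "qdefect v (1 - 4 * \<rho>) = pid v 4"
    and kappa: "is_unit v \<kappa>" "ideal_ord v ((\<lambda>y. inverse \<kappa> * y) ` qdefect v \<kappa>) (2 * int e - 1)"
    and delta: "is_unit v \<delta>"
    and rs: "is_unit v r" "is_unit v s" "\<kappa> = s^2 * (1 + r * \<pi> ^ (2 * e - 1))"
  shows "\<exists>(G :: 'a^3^3) M \<sigma> x1 x2 x3.
           symm G \<and> bong v G [x1, x2, x3] M \<and>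
           Qf G x1 = \<delta> * kappa_sharp \<rho> r \<pi> e \<and>
           Qf G x2 = - \<delta> * kappa_sharp \<rho> r \<pi> e * \<kappa> * (\<pi>^2 / \<pi>^(2 * e)) \<and>
           Qf G x3 = \<delta> * \<kappa> \<and>
           lattice_iso (gram_lhs \<pi> \<rho> \<delta>) G \<sigma> (stdlat v) M"
proof -
  \<comment> \<open>only the shape of \<open>\<kappa>\<close> enters\<close>
  interpret dyadic_field v by unfold_locales (rule F)
  define m where "m = \<pi> ^ (2 * e - 1)"
  interpret bong_construction v \<pi> m "2 / \<pi> ^ e" \<rho> \<delta> r s
    unfolding m_def using unif e_def rho(1) delta rs(1,2) by (rule bong_construction_uniformizer)
  have "kappa_sharp \<rho> r \<pi> e = ksharp"
    unfolding kappa_sharp_def m_def[symmetric] ksharp_def g_def by (simp add: divide_inverse ac_simps)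
  moreover have "\<kappa> = bong_construction.\<kappa> m r s" unfolding rs(3) m_def[symmetric] \<kappa>_def g_def ..
  moreover have "\<pi>\<^sup>2 / \<pi> ^ (2 * e) = \<pi> / m"
    unfolding m_def using unif e_def val_two_pos by (simp add: power2_eq_square power_diff)
  ultimately show ?thesis using exists_bong unfolding a1_def a2_def a3_def by (simp add: ac_simps)
qed

end
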